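(* A square complex matrix $U$ is unitary with all entries in $\mathcal{R}_{12}$ if and only if $U$ can be expressed as a product of one-level operators of type $\zeta_{12}$ and two-level operators of type $X$ and of type $H'$ (of the same dimension as $U$).
   Context: $\zeta_{12}=e^{2\pi i/12}$ and $\mathcal{R}_{12}$ is the smallest subring of $\mathbb{C}$ containing $1/2$ and $\zeta_{12}$. $X=\begin{bmatrix}0&1\\1&0\end{bmatrix}$ and $H'=\frac{1+i}{2}\begin{bmatrix}1&1\\1&-1\end{bmatrix}$. For $c\in\mathbb{C}$ and $0\le j\le m-1$, the one-level operator of type $c$ is the $m\times m$ matrix $c_{[j]}$ equal to the identity except that its $(j,j)$ entry is $c$. For $M\in\mathrm{M}_2(\mathbb{C})$ and $0\le j<j'\le m-1$, the two-level operator of type $M$ is the $m\times m$ matrix $M_{[j,j']}$ equal to the identity except that its entries in positions $(j,j),(j,j'),(j',j),(j',j')$ are $M_{1,1},M_{1,2},M_{2,1},M_{2,2}$ respectively. *)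

theory Defs
  imports Complex_Main "Jordan_Normal_Form.Matrix"
begin

definition zeta12 :: complex where
  "zeta12 = cis (2 * pi / 12)"

inductive_set R12 :: "complex set" where
  half: "1/2 \<in> R12"
| zeta: "zeta12 \<in> R12"
| one: "1 \<in> R12"
| neg: "a \<in> R12 \<Longrightarrow> - a \<in> R12"
| add: "a \<in> R12 \<Longrightarrow> b \<in> R12 \<Longrightarrow> a + b \<in> R12"
| mult: "a \<in> R12 \<Longrightarrow> b \<in> R12 \<Longrightarrow> a * b \<in> R12"

definition Xmat :: "complex mat" where
  "Xmat = mat_of_rows_list 2 [[0, 1], [1, 0]]"

definition Hprime :: "complex mat" where
  "Hprime = ((1 + \<i>) / 2) \<cdot>\<^sub>m mat_of_rows_list 2 [[1, 1], [1, -1]]"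

definition conj_transpose :: "complex mat \<Rightarrow> complex mat" where
  "conj_transpose U = mat (dim_col U) (dim_row U) (\<lambda>(i, j). cnj (U $$ (j, i)))"

definition unitary_mat :: "complex mat \<Rightarrow> bool" where
  "unitary_mat U \<longleftrightarrow> (\<exists>n. U \<in> carrier_mat n n \<and>
      U * conj_transpose U = 1\<^sub>m n \<and> conj_transpose U * U = 1\<^sub>m n)"

definition one_level :: "nat \<Rightarrow> complex \<Rightarrow> nat \<Rightarrow> complex mat" where
  "one_level m c j = mat m m (\<lambda>(a, b). if a = j \<and> b = j then c
                                       else if a = b then 1 else 0)"

definition two_level :: "nat \<Rightarrow> complex mat \<Rightarrow> nat \<Rightarrow> nat \<Rightarrow> complex mat" where
  "two_level m M j j' = mat m m (\<lambda>(a, b).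
      if a = j \<and> b = j then M $$ (0, 0)
      else if a = j \<and> b = j' then M $$ (0, 1)
      else if a = j' \<and> b = j then M $$ (1, 0)
      else if a = j' \<and> b = j' then M $$ (1, 1)
      else if a = b then 1 else 0)"

definition generators :: "nat \<Rightarrow> complex mat set" where
  "generators m =
     {one_level m zeta12 j | j. j < m} \<union>
     {two_level m Xmat j j' | j j'. j < j' \<and> j' < m} \<union>
     {two_level m Hprime j j' | j j'. j < j' \<and> j' < m}"

definition is_product_of :: "nat \<Rightarrow> complex mat set \<Rightarrow> complex mat \<Rightarrow> bool" where
  "is_product_of m S U \<longleftrightarrow>
     (\<exists>gs. set gs \<subseteq> S \<and> U = foldr (\<lambda>g acc. g * acc) gs (1\<^sub>m m))"

end

theory Submission
  imports Defs "Jordan_Normal_Form.Determinant"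
begin

text \<open>Write \<open>delta = 1 + \<i>\<close>. Since \<open>2 = - \<i> * delta^2\<close>, the ring \<open>R12\<close> is \<open>Z[zeta12]\<close> with
  \<open>delta\<close> inverted, and every \<open>x \<in> R12\<close> has a least denominator exponent: the least \<open>k\<close> with
  \<open>x * delta^k \<in> Z[zeta12]\<close>. The generators are unitary with entries in \<open>R12\<close>, which gives one
  direction. Conversely, a unitary \<open>U\<close> over \<open>R12\<close> is reduced to the identity column by column,
  multiplying on the left by generators that fix the columns already treated. A column of norm 1
  with entries in \<open>Z[zeta12]\<close> has exactly one nonzero entry, a power of \<open>zeta12\<close>, which a
  one-level operator and a swap turn into the diagonal entry 1. Otherwise let \<open>n + 1\<close> be the
  largest exponent in the column and write the squared norms of the scaled entries
  \<open>x\<^sub>i * delta^(n+1)\<close> as \<open>A\<^sub>i + B\<^sub>i * sqrt 3\<close> with integers \<open>A\<^sub>i, B\<^sub>i\<close>. The column norm forces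
  \<open>\<Sum> A\<^sub>i = 2^(n+1)\<close> and \<open>\<Sum> B\<^sub>i = 0\<close>, and a parity count pairs an entry of maximal
  exponent with a second one such that \<open>(x\<^sub>i + zeta12^t * x\<^sub>j) * delta^(n+1)\<close> is divisible by 2.
  Multiplying row \<open>j\<close> by \<open>zeta12^t\<close> and applying \<open>H'\<close> to rows \<open>i, j\<close> lowers both exponents.
  Finally, the inverse of a generator is again a product of generators.\<close>

section \<open>The ring \<open>Z[zeta12]\<close>\<close>

lemma zeta12_eq: "zeta12 = Complex (sqrt 3 / 2) (1 / 2)"
proof -
  have "2 * pi / 12 = pi / 6" by simp
  then show ?thesis unfolding zeta12_def by (simp add: complex_eq_iff cos_30 sin_30)
qed

lemma zeta12_power_2: "zeta12 ^ 2 = Complex (1 / 2) (sqrt 3 / 2)"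
proof -
  have "real 2 * (2 * pi / 12) = pi / 3" by simp
  then show ?thesis unfolding zeta12_def DeMoivre by (simp add: complex_eq_iff cos_60 sin_60)
qed

lemma zeta12_power_3: "zeta12 ^ 3 = \<i>"
proof -
  have "real 3 * (2 * pi / 12) = pi / 2" by simp
  then show ?thesis unfolding zeta12_def DeMoivre by (simp add: complex_eq_iff)
qed

lemma zeta12_power_12: "zeta12 ^ 12 = 1"
  unfolding zeta12_def DeMoivre by simp

lemma cmod_zeta12: "cmod zeta12 = 1"
  by (simp add: zeta12_def)

lemma zeta12_nonzero [simp]: "zeta12 \<noteq> 0"
  by (simp add: zeta12_def)

lemma int_square_eq_3_times_square: "(p::int)^2 = 3 * q^2 \<Longrightarrow> q = 0"
proof (induction "nat \<bar>q\<bar>" arbitrary: p q rule: less_induct)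
  case less
  have three_dvd: "3 dvd x" if "x^2 = 3 * y^2" for x y :: int
  proof -
    have "(x mod 3)^2 mod 3 = 0" using that by (simp add: power_mod)
    moreover have "x mod 3 = 0 \<or> x mod 3 = 1 \<or> x mod 3 = 2" by arith
    ultimately show ?thesis by auto
  qed
  obtain p' where p: "p = 3 * p'" using three_dvd[OF less.prems] by auto
  then have "q^2 = 3 * p'^2" using less.prems by (simp add: power_mult_distrib)
  then have "3 dvd q" by (rule three_dvd)
  then obtain q' where q: "q = 3 * q'" by blast
  then have "p'^2 = 3 * q'^2" using \<open>q^2 = 3 * p'^2\<close> by (simp add: power_mult_distrib)
  show ?case
  proof (rule ccontr)
    assume "q \<noteq> 0"
    then have "nat \<bar>q'\<bar> < nat \<bar>q\<bar>" using q by auto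
    then have "q' = 0" using less.hyps \<open>p'^2 = 3 * q'^2\<close> by blast
    with q \<open>q \<noteq> 0\<close> show False by simp
  qed
qed

lemma int_plus_int_sqrt3_eq_0:
  fixes p q :: int
  assumes "of_int p + of_int q * sqrt 3 = (0::real)"
  shows "p = 0 \<and> q = 0"
proof -
  have "(of_int p)^2 = (of_int q * sqrt 3 :: real)^2"
    using assms by (simp add: eq_neg_iff_add_eq_0[symmetric])
  then have "real_of_int (p^2) = real_of_int (3 * q^2)" by (simp add: power_mult_distrib)
  then have "p^2 = 3 * q^2" by (simp only: of_int_eq_iff)
  then have "q = 0" by (rule int_square_eq_3_times_square)
  then show ?thesis using assms by simp
qed

type_synonym coords = "int \<times> int \<times> int \<times> int"

definition of_coords :: "coords \<Rightarrow> complex" where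
  "of_coords = (\<lambda>(a, b, c, d). of_int a + of_int b * zeta12 + of_int c * zeta12^2 + of_int d * zeta12^3)"

lemma of_coords_Complex:
  "of_coords (a, b, c, d) = Complex (a + b * sqrt 3 / 2 + c / 2) (b / 2 + c * sqrt 3 / 2 + d)"
  unfolding of_coords_def zeta12_power_2 zeta12_power_3 by (simp add: zeta12_eq complex_eq_iff)

definition Z12 :: "complex set" where
  "Z12 = range of_coords"

fun rot_coords :: "coords \<Rightarrow> coords" where
  "rot_coords (a, b, c, d) = (-d, a, b + d, c)"

lemma of_coords_rot_coords: "of_coords (rot_coords q) = zeta12 * of_coords q"
proof -
  obtain a b c d where q: "q = (a, b, c, d)" by (cases q) auto
  have "sqrt 3 * sqrt 3 = (3::real)" by simp
  then show ?thesis
    unfolding q zeta12_eq rot_coords.simps of_coords_Complex by (simp add: complex_eq_iff field_simps)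
qed

lemma of_coords_funpow_rot_coords: "of_coords ((rot_coords ^^ t) q) = zeta12 ^ t * of_coords q"
  by (induction t) (simp_all add: of_coords_rot_coords)

lemma of_coords_add: "of_coords (a, b, c, d) + of_coords (e, f, g, h) = of_coords (a + e, b + f, c + g, d + h)"
  by (simp add: of_coords_def algebra_simps)

lemma Z12_of_coords [simp]: "of_coords q \<in> Z12"
  by (simp add: Z12_def)

lemma Z12_cases:
  assumes "x \<in> Z12" obtains a b c d where "x = of_coords (a, b, c, d)"
  using assms unfolding Z12_def by (metis prod_cases4 rangeE)

lemma Z12_add: "x \<in> Z12 \<Longrightarrow> y \<in> Z12 \<Longrightarrow> x + y \<in> Z12"
  by (elim Z12_cases) (metis of_coords_add Z12_of_coords)

lemma Z12_uminus: "x \<in> Z12 \<Longrightarrow> - x \<in> Z12"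
proof (elim Z12_cases)
  fix a b c d assume "x = of_coords (a, b, c, d)"
  then have "- x = of_coords (- a, - b, - c, - d)" by (simp add: of_coords_def algebra_simps)
  then show "- x \<in> Z12" by simp
qed

lemma Z12_diff: "x \<in> Z12 \<Longrightarrow> y \<in> Z12 \<Longrightarrow> x - y \<in> Z12"
  using Z12_add[of x "- y"] Z12_uminus[of y] by simp

(* The product formula comes from the reduction zeta12^4 = zeta12^2 - 1. *)
lemma of_coords_mult:
  "of_coords (a, b, c, d) * of_coords (e, f, g, h) = of_coords
     (a*e - (b*h + c*g + d*f) - d*h, a*f + b*e - (c*h + d*g),
      a*g + b*f + c*e + (b*h + c*g + d*f), a*h + b*g + c*f + d*e + (c*h + d*g))"
proof -
  have "sqrt 3 * sqrt 3 = (3::real)" by simp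
  then show ?thesis unfolding of_coords_Complex by (simp add: complex_eq_iff field_simps)
qed

lemma Z12_mult: "x \<in> Z12 \<Longrightarrow> y \<in> Z12 \<Longrightarrow> x * y \<in> Z12"
  by (elim Z12_cases) (metis of_coords_mult Z12_of_coords)

lemma Z12_0 [simp]: "0 \<in> Z12" and Z12_1 [simp]: "1 \<in> Z12"
  and zeta12_in_Z12 [simp]: "zeta12 \<in> Z12" and imaginary_unit_in_Z12 [simp]: "\<i> \<in> Z12"
  using Z12_of_coords[of "(0, 0, 0, 0)"] Z12_of_coords[of "(1, 0, 0, 0)"]
    Z12_of_coords[of "(0, 1, 0, 0)"] Z12_of_coords[of "(0, 0, 0, 1)"]
  by (simp_all add: of_coords_def zeta12_power_3)

lemma Z12_power: "x \<in> Z12 \<Longrightarrow> x ^ n \<in> Z12"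
  by (induction n) (simp_all add: Z12_mult)

lemma Z12_half_of_coords:
  assumes "even a" "even b" "even c" "even d"
  shows "of_coords (a, b, c, d) / 2 \<in> Z12"
proof -
  obtain a' b' c' d' where "a = 2 * a'" "b = 2 * b'" "c = 2 * c'" "d = 2 * d'"
    using assms by (meson dvdE)
  then have "of_coords (a, b, c, d) / 2 = of_coords (a', b', c', d')"
    by (simp add: of_coords_def field_simps)
  then show ?thesis by simp
qed

fun normsq_int :: "coords \<Rightarrow> int" where
  "normsq_int (a, b, c, d) = a*a + b*b + c*c + d*d + a*c + b*d"

fun normsq_sqrt3 :: "coords \<Rightarrow> int" where
  "normsq_sqrt3 (a, b, c, d) = a*b + b*c + c*d"

lemma cmod_of_coords_squared:
  "(cmod (of_coords q))^2 = of_int (normsq_int q) + of_int (normsq_sqrt3 q) * sqrt 3"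
proof -
  obtain a b c d where q: "q = (a, b, c, d)" by (cases q) auto
  have "sqrt 3 * sqrt 3 = (3::real)" by simp
  then show ?thesis
    unfolding q cmod_power2 of_coords_Complex by (simp add: field_simps power2_eq_square)
qed

lemma four_normsq_int: "4 * normsq_int (a, b, c, d) = (2*a + c)^2 + 3*c^2 + (2*b + d)^2 + 3*d^2"
  by (simp add: power2_eq_square algebra_simps)

lemma normsq_int_nonneg: "normsq_int q \<ge> 0"
proof -
  obtain a b c d where q: "q = (a, b, c, d)" by (cases q) auto
  have "4 * normsq_int q \<ge> 0" unfolding q four_normsq_int by simp
  then show ?thesis by simp
qed

lemma normsq_int_eq_0: "normsq_int q = 0 \<Longrightarrow> of_coords q = 0"
proof -
  obtain a b c d where q: "q = (a, b, c, d)" by (cases q) auto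
  assume "normsq_int q = 0"
  then have "(2*a + c)^2 + 3*c^2 + (2*b + d)^2 + 3*d^2 = 0" using four_normsq_int[of a b c d] q by simp
  then have "c = 0 \<and> d = 0 \<and> 2*a + c = 0 \<and> 2*b + d = 0"
    by (smt (verit) zero_le_power2 power2_eq_square mult_eq_0_iff)
  then have "q = (0, 0, 0, 0)" using q by simp
  then show ?thesis by (simp add: of_coords_def)
qed

lemma normsq_int_eq_1: assumes "normsq_int q = 1" shows "\<exists>t<12. of_coords q = zeta12 ^ t"
proof -
  obtain a b c d where q: "q = (a, b, c, d)" by (cases q) auto
  have sum4: "(2*a + c)^2 + 3*c^2 + (2*b + d)^2 + 3*d^2 = 4" using four_normsq_int[of a b c d] q assms by simp
  have "c^2 \<le> 1" "d^2 \<le> 1" "(2*a + c)^2 \<le> 4" "(2*b + d)^2 \<le> 4"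
    using sum4 zero_le_power2[of c] zero_le_power2[of d] zero_le_power2[of "2*a + c"]
      zero_le_power2[of "2*b + d"] by linarith+
  then have "\<bar>c\<bar> \<le> 1" "\<bar>d\<bar> \<le> 1" "\<bar>2*a + c\<bar> \<le> 2" "\<bar>2*b + d\<bar> \<le> 2"
    by (simp_all add: abs_square_le_1 abs_le_square_iff[where y = 2, simplified])
  then have "a \<in> {-1, 0, 1}" "b \<in> {-1, 0, 1}" "c \<in> {-1, 0, 1}" "d \<in> {-1, 0, 1}" by auto
  then have "q \<in> set (map (\<lambda>t. (rot_coords ^^ t) (1, 0, 0, 0)) [0..<12])"
    using assms unfolding q by (simp add: eval_nat_numeral upt_rec) (elim disjE; simp)
  then obtain t where "t < 12" "q = (rot_coords ^^ t) (1, 0, 0, 0)" by auto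
  moreover have "of_coords (1, 0, 0, 0) = 1" by (simp add: of_coords_def)
  ultimately show ?thesis using of_coords_funpow_rot_coords by auto
qed

definition delta :: complex where
  "delta = 1 + \<i>"

lemma delta_of_coords: "delta = of_coords (1, 0, 0, 1)"
  by (simp add: delta_def of_coords_def zeta12_power_3)

lemma delta_in_Z12 [simp]: "delta \<in> Z12"
  by (simp add: delta_of_coords)

lemma delta_nonzero [simp]: "delta \<noteq> 0"
  by (simp add: delta_def complex_eq_iff)

lemma cmod_delta_squared: "(cmod delta)^2 = 2"
  by (simp add: delta_def cmod_def)

lemma of_coords_eq_normsq:
  assumes "of_coords q = c * of_coords r" "(cmod c)^2 = of_int k"
  shows "normsq_int q = k * normsq_int r \<and> normsq_sqrt3 q = k * normsq_sqrt3 r"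
proof -
  have "(cmod (of_coords q))^2 = of_int k * (cmod (of_coords r))^2"
    unfolding assms(1) by (simp add: norm_mult power_mult_distrib assms(2))
  then have "of_int (normsq_int q - k * normsq_int r) + of_int (normsq_sqrt3 q - k * normsq_sqrt3 r) * sqrt 3 = (0::real)"
    unfolding cmod_of_coords_squared by (simp add: algebra_simps)
  then show ?thesis using int_plus_int_sqrt3_eq_0 by fastforce
qed

lemma delta_dvd_iff_even_normsq:
  "of_coords q / delta \<in> Z12 \<longleftrightarrow> even (normsq_int q + normsq_sqrt3 q)"
proof
  assume "of_coords q / delta \<in> Z12"
  then obtain r where "of_coords q / delta = of_coords r" unfolding Z12_def by blast
  then have "of_coords q = delta * of_coords r" by (simp add: divide_eq_eq mult.commute)
  then show "even (normsq_int q + normsq_sqrt3 q)"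
    using of_coords_eq_normsq[of q delta r 2] cmod_delta_squared by simp
next
  obtain a b c d where q: "q = (a, b, c, d)" by (cases q) auto
  assume "even (normsq_int q + normsq_sqrt3 q)"
  then have "even (a + b + d)" "even (b + c)" "even (c - b)" "even (d - a - c)"
    unfolding q by (auto simp: even_add even_mult_iff)
  then obtain x1 x2 x3 x4 where x: "a + b + d = 2 * x1" "b + c = 2 * x2" "c - b = 2 * x3" "d - a - c = 2 * x4"
    by (meson dvdE)
  have "delta * of_coords (x1, x2, x3, x4) = of_coords (x1 - x2 - x4, x2 - x3, x2 + x3, x1 + x3 + x4)"
    unfolding delta_of_coords of_coords_mult by (simp add: algebra_simps)
  also have "(x1 - x2 - x4, x2 - x3, x2 + x3, x1 + x3 + x4) = q"
    using x unfolding q by simp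
  finally show "of_coords q / delta \<in> Z12" by (metis Z12_of_coords delta_nonzero nonzero_mult_div_cancel_left)
qed

lemma even_normsq_parts: "even (normsq_int q + normsq_sqrt3 q) \<Longrightarrow> even (normsq_int q) \<and> even (normsq_sqrt3 q)"
  by (cases q) (auto simp: even_add even_mult_iff)

lemma exists_rotation_sum_div_2:
  assumes "odd (normsq_int q + normsq_sqrt3 q)" "odd (normsq_int r + normsq_sqrt3 r)"
    "even (normsq_sqrt3 q) = even (normsq_sqrt3 r)"
  shows "\<exists>t<6. (of_coords q + zeta12 ^ t * of_coords r) / 2 \<in> Z12"
proof -
  obtain a b c d where q: "q = (a, b, c, d)" by (cases q) auto
  obtain e f g h where r: "r = (e, f, g, h)" by (cases r) auto
  \<comment> \<open>Only the coordinates modulo 2 matter, so this is a propositional statement about parities.\<close>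
  have "\<exists>t\<in>{0, 1, 2, 3, 4, 5}. \<exists>e' f' g' h'. (rot_coords ^^ t) r = (e', f', g', h') \<and>
          even (a + e') \<and> even (b + f') \<and> even (c + g') \<and> even (d + h')"
    using assms unfolding q r by (simp add: eval_nat_numeral even_add even_mult_iff) argo
  then obtain t e' f' g' h' where t: "t \<in> {0, 1, 2, 3, 4, 5}" and r': "(rot_coords ^^ t) r = (e', f', g', h')"
    and even_sum: "even (a + e')" "even (b + f')" "even (c + g')" "even (d + h')"
    by blast
  have "of_coords q + zeta12 ^ t * of_coords r = of_coords (a + e', b + f', c + g', d + h')"
    unfolding q of_coords_funpow_rot_coords[symmetric] r' of_coords_add ..
  moreover have "of_coords (a + e', b + f', c + g', d + h') / 2 \<in> Z12"
    using even_sum by (rule Z12_half_of_coords)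
  moreover have "t < 6" using t by auto
  ultimately show ?thesis by auto
qed

section \<open>Least denominator exponents\<close>

lemma R12_0 [simp]: "0 \<in> R12"
  using R12.add[OF R12.one R12.neg[OF R12.one]] by simp

lemma R12_power: "a \<in> R12 \<Longrightarrow> a ^ n \<in> R12"
  by (induction n) (auto intro: R12.intros)

lemma R12_sum: "(\<And>x. x \<in> S \<Longrightarrow> f x \<in> R12) \<Longrightarrow> sum f S \<in> R12"
  by (induction S rule: infinite_finite_induct) (auto intro: R12.intros)

lemma R12_half_delta: "delta / 2 \<in> R12"
proof -
  have "\<i> \<in> R12" using R12_power[OF R12.zeta, of 3] by (simp add: zeta12_power_3)
  then have "1 / 2 * (1 + \<i>) \<in> R12" by (blast intro: R12.intros)
  then show ?thesis by (simp add: delta_def)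
qed

lemma R12_delta_power_in_Z12: "x \<in> R12 \<Longrightarrow> \<exists>k. x * delta ^ k \<in> Z12"
proof (induction rule: R12.induct)
  case half
  have "1 / 2 * delta ^ 2 = \<i>" by (simp add: delta_def power2_eq_square algebra_simps)
  then show ?case by (metis imaginary_unit_in_Z12)
next
  case zeta
  show ?case using zeta12_in_Z12 by (metis mult.right_neutral power_0)
next
  case one
  show ?case using Z12_1 by (metis mult.right_neutral power_0)
next
  case (neg a)
  then show ?case using Z12_uminus by fastforce
next
  case (add a b)
  then obtain k l where "a * delta ^ k \<in> Z12" "b * delta ^ l \<in> Z12" by blast
  then have "(a * delta ^ k) * delta ^ l + (b * delta ^ l) * delta ^ k \<in> Z12"
    by (simp add: Z12_add Z12_mult Z12_power)
  then have "(a + b) * delta ^ (k + l) \<in> Z12" by (simp add: algebra_simps power_add)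
  then show ?case by blast
next
  case (mult a b)
  then obtain k l where "a * delta ^ k \<in> Z12" "b * delta ^ l \<in> Z12" by blast
  then have "(a * delta ^ k) * (b * delta ^ l) \<in> Z12" by (rule Z12_mult)
  then have "(a * b) * delta ^ (k + l) \<in> Z12" by (simp add: algebra_simps power_add)
  then show ?case by blast
qed

definition lde :: "complex \<Rightarrow> nat" where
  "lde x = (LEAST k. x * delta ^ k \<in> Z12)"

lemma Z12_mult_delta_power_lde: "x \<in> R12 \<Longrightarrow> x * delta ^ lde x \<in> Z12"
  unfolding lde_def using R12_delta_power_in_Z12 by (rule LeastI_ex)

lemma lde_le: "x * delta ^ k \<in> Z12 \<Longrightarrow> lde x \<le> k"
  unfolding lde_def by (rule Least_le)

lemma lde_0 [simp]: "lde 0 = 0"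
  using lde_le[of 0 0] by simp

lemma Z12_uminus_iff: "- x \<in> Z12 \<longleftrightarrow> x \<in> Z12"
  using Z12_uminus[of x] Z12_uminus[of "- x"] by auto

lemma lde_uminus [simp]: "lde (- x) = lde x"
proof -
  have "- x * delta ^ k \<in> Z12 \<longleftrightarrow> x * delta ^ k \<in> Z12" for k
    using Z12_uminus_iff[of "x * delta ^ k"] by simp
  then show ?thesis unfolding lde_def by simp
qed

lemma Z12_mult_delta_power_mono:
  assumes "x * delta ^ k \<in> Z12" "k \<le> n"
  shows "x * delta ^ n \<in> Z12"
proof -
  have "x * delta ^ n = (x * delta ^ k) * delta ^ (n - k)"
    using assms(2) by (simp add: mult.assoc flip: power_add)
  then show ?thesis using assms(1) by (metis Z12_mult Z12_power delta_in_Z12)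
qed

lemma Z12_mult_delta_power_iff_lde_le: "x \<in> R12 \<Longrightarrow> x * delta ^ n \<in> Z12 \<longleftrightarrow> lde x \<le> n"
  using lde_le Z12_mult_delta_power_lde Z12_mult_delta_power_mono by blast

lemma lde_le_iff_even_normsq:
  assumes "x \<in> R12" "x * delta ^ Suc n = of_coords q"
  shows "lde x \<le> n \<longleftrightarrow> even (normsq_int q + normsq_sqrt3 q)"
proof -
  have "x * delta ^ n = of_coords q / delta" using assms(2) by (simp add: field_simps)
  then show ?thesis
    using Z12_mult_delta_power_iff_lde_le[OF assms(1)] delta_dvd_iff_even_normsq by metis
qed

lemma lde_Hprime_combination:
  assumes "y * delta ^ Suc n \<in> Z12" "(x + y) * delta ^ Suc n / 2 \<in> Z12"
  shows "lde (delta / 2 * (x + y)) \<le> n" "lde (delta / 2 * (x - y)) \<le> n"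
proof -
  have "delta / 2 * (x + y) * delta ^ n = (x + y) * delta ^ Suc n / 2" by simp
  then show "lde (delta / 2 * (x + y)) \<le> n" using assms(2) lde_le by metis
  have "delta / 2 * (x - y) * delta ^ n = (x + y) * delta ^ Suc n / 2 - y * delta ^ Suc n"
    by (simp add: field_simps)
  then show "lde (delta / 2 * (x - y)) \<le> n" using assms Z12_diff lde_le by metis
qed

lemma unit_vector_coords:
  fixes x :: "nat \<Rightarrow> complex"
  assumes "(\<Sum>i<m. (cmod (x i))^2) = 1" "\<forall>i<m. x i * delta ^ n \<in> Z12"
  shows "\<exists>q. (\<forall>i<m. x i * delta ^ n = of_coords (q i)) \<and>
    (\<Sum>i<m. normsq_int (q i)) = 2 ^ n \<and> (\<Sum>i<m. normsq_sqrt3 (q i)) = 0"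
proof -
  have "\<forall>i<m. \<exists>r. x i * delta ^ n = of_coords r" using assms(2) unfolding Z12_def by blast
  then obtain q where q: "\<forall>i<m. x i * delta ^ n = of_coords (q i)" by metis
  have "(cmod (of_coords (q i)))^2 = 2 ^ n * (cmod (x i))^2" if "i < m" for i
  proof -
    have "of_coords (q i) = x i * delta ^ n" using q that by simp
    then have "(cmod (of_coords (q i)))^2 = (cmod (x i))^2 * ((cmod delta)^n)^2"
      by (simp add: norm_mult norm_power power_mult_distrib)
    also have "((cmod delta)^n)^2 = ((cmod delta)^2)^n"
      by (simp flip: power_mult add: mult.commute)
    finally show ?thesis by (simp add: cmod_delta_squared)
  qed
  then have "(\<Sum>i<m. (cmod (of_coords (q i)))^2) = 2 ^ n * (\<Sum>i<m. (cmod (x i))^2)"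
    by (simp add: sum_distrib_left)
  then have "real_of_int ((\<Sum>i<m. normsq_int (q i)) - 2 ^ n) +
      real_of_int (\<Sum>i<m. normsq_sqrt3 (q i)) * sqrt 3 = 0"
    unfolding cmod_of_coords_squared assms(1) by (simp add: sum.distrib sum_distrib_right)
  from int_plus_int_sqrt3_eq_0[OF this] show ?thesis using q by auto
qed

lemma unit_vector_in_Z12:
  fixes x :: "nat \<Rightarrow> complex"
  assumes "(\<Sum>i<m. (cmod (x i))^2) = 1" "\<forall>i<m. x i \<in> Z12"
  shows "\<exists>p<m. (\<exists>t. x p = zeta12 ^ t) \<and> (\<forall>i<m. i \<noteq> p \<longrightarrow> x i = 0)"
proof -
  have "\<forall>i<m. x i * delta ^ 0 \<in> Z12" using assms(2) by simp
  from unit_vector_coords[OF assms(1) this]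
  obtain q where q: "\<forall>i<m. x i = of_coords (q i)" and sum_normsq: "(\<Sum>i<m. normsq_int (q i)) = 1"
    by auto
  obtain p where p: "p < m" "normsq_int (q p) \<noteq> 0"
    using sum_normsq by (metis (no_types) lessThan_iff sum.neutral zero_neq_one)
  have split: "(\<Sum>i<m. normsq_int (q i)) = normsq_int (q p) + (\<Sum>i\<in>{..<m} - {p}. normsq_int (q i))"
    by (rule sum.remove) (use p in auto)
  have rest_nonneg: "(\<Sum>i\<in>{..<m} - {p}. normsq_int (q i)) \<ge> 0"
    by (intro sum_nonneg) (simp add: normsq_int_nonneg)
  have "normsq_int (q p) = 1"
    using split rest_nonneg sum_normsq p normsq_int_nonneg[of "q p"] by linarith
  then have "\<exists>t. x p = zeta12 ^ t" using q p normsq_int_eq_1 by fastforce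
  moreover have "x i = 0" if "i < m" "i \<noteq> p" for i
  proof -
    have "(\<Sum>i\<in>{..<m} - {p}. normsq_int (q i)) = 0"
      using split sum_normsq \<open>normsq_int (q p) = 1\<close> by linarith
    then have "normsq_int (q i) = 0"
      using that sum_nonneg_eq_0_iff[of "{..<m} - {p}" "\<lambda>i. normsq_int (q i)"] normsq_int_nonneg by auto
    then show ?thesis using q that normsq_int_eq_0 by simp
  qed
  ultimately show ?thesis using p by blast
qed

lemma exists_odd_partner:
  fixes A B :: "nat \<Rightarrow> int"
  assumes "finite S" "i \<in> S" "even (sum A S)" "even (sum B S)" "odd (A i + B i)"
    and parts: "\<And>j. j \<in> S \<Longrightarrow> even (A j + B j) \<Longrightarrow> even (A j) \<and> even (B j)"
  shows "\<exists>j\<in>S - {i}. odd (A j + B j) \<and> even (B j) = even (B i)"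
proof (rule ccontr)
  assume no_partner: "\<not> ?thesis"
  have parity_of_sum: "even (sum f S) = even (f i)" if "\<And>j. j \<in> S - {i} \<Longrightarrow> even (f j)"
    for f :: "nat \<Rightarrow> int"
  proof -
    have "sum f S = f i + sum f (S - {i})" using assms(1,2) by (rule sum.remove)
    moreover have "even (sum f (S - {i}))" using that by (rule dvd_sum)
    ultimately show ?thesis by simp
  qed
  have others: "even (A j + B j) \<or> even (B j) \<noteq> even (B i)" if "j \<in> S - {i}" for j
    using no_partner that by blast
  show False
  proof (cases "even (B i)")
    case True
    have "even (A j)" if "j \<in> S - {i}" for j
      using others[OF that] parts[of j] that True by auto
    then show False using parity_of_sum[of A] assms(3,5) True by simp
  next
    case False
    have "even (B j)" if "j \<in> S - {i}" for j
      using others[OF that] parts[of j] that False by auto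
    then show False using parity_of_sum[of B] assms(4) False by simp
  qed
qed

lemma exists_partner_coords:
  fixes q :: "nat \<Rightarrow> coords"
  assumes "(\<Sum>i<m. normsq_int (q i)) = 2 ^ Suc n" "(\<Sum>i<m. normsq_sqrt3 (q i)) = 0"
    "i0 < m" "odd (normsq_int (q i0) + normsq_sqrt3 (q i0))"
  shows "\<exists>j<m. j \<noteq> i0 \<and> odd (normsq_int (q j) + normsq_sqrt3 (q j)) \<and>
    (\<exists>t. (of_coords (q i0) + zeta12 ^ t * of_coords (q j)) / 2 \<in> Z12)"
proof -
  have "\<exists>j\<in>{..<m} - {i0}. odd (normsq_int (q j) + normsq_sqrt3 (q j)) \<and>
      even (normsq_sqrt3 (q j)) = even (normsq_sqrt3 (q i0))"
  proof (rule exists_odd_partner[where A = "\<lambda>i. normsq_int (q i)" and B = "\<lambda>i. normsq_sqrt3 (q i)"])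
    show "even (\<Sum>i<m. normsq_int (q i))" "even (\<Sum>i<m. normsq_sqrt3 (q i))"
      unfolding assms(1,2) by simp_all
    show "even (normsq_int (q j) + normsq_sqrt3 (q j)) \<Longrightarrow> even (normsq_int (q j)) \<and> even (normsq_sqrt3 (q j))"
      for j by (rule even_normsq_parts)
  qed (use assms(3,4) in simp_all)
  then obtain j where j: "j < m" "j \<noteq> i0" "odd (normsq_int (q j) + normsq_sqrt3 (q j))"
    "even (normsq_sqrt3 (q i0)) = even (normsq_sqrt3 (q j))"
    by auto
  then show ?thesis using exists_rotation_sum_div_2[OF assms(4) j(3,4)] by blast
qed

lemma exists_lde_partner:
  fixes x :: "nat \<Rightarrow> complex"
  assumes "(\<Sum>i<m. (cmod (x i))^2) = 1" "\<forall>i<m. x i \<in> R12" "\<forall>i<m. lde (x i) \<le> Suc n"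
    "i0 < m" "lde (x i0) = Suc n"
  shows "\<exists>j<m. j \<noteq> i0 \<and> lde (x j) = Suc n \<and> (\<exists>t. (x i0 + zeta12 ^ t * x j) * delta ^ Suc n / 2 \<in> Z12)"
proof -
  have "\<forall>i<m. x i * delta ^ Suc n \<in> Z12"
    using assms(2,3) Z12_mult_delta_power_iff_lde_le by blast
  then obtain q where q: "\<And>i. i < m \<Longrightarrow> x i * delta ^ Suc n = of_coords (q i)"
    and sums: "(\<Sum>i<m. normsq_int (q i)) = 2 ^ Suc n" "(\<Sum>i<m. normsq_sqrt3 (q i)) = 0"
    using unit_vector_coords[OF assms(1)] by blast
  have lde_iff: "lde (x i) \<le> n \<longleftrightarrow> even (normsq_int (q i) + normsq_sqrt3 (q i))" if "i < m" for i
    using lde_le_iff_even_normsq assms(2) q that by blast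
  have odd_i0: "odd (normsq_int (q i0) + normsq_sqrt3 (q i0))"
    using lde_iff[OF assms(4)] assms(5) by linarith
  obtain j t where j: "j < m" "j \<noteq> i0" "odd (normsq_int (q j) + normsq_sqrt3 (q j))"
    and t: "(of_coords (q i0) + zeta12 ^ t * of_coords (q j)) / 2 \<in> Z12"
    using exists_partner_coords[OF sums assms(4) odd_i0] by blast
  have "(x i0 + zeta12 ^ t * x j) * delta ^ Suc n = x i0 * delta ^ Suc n + zeta12 ^ t * (x j * delta ^ Suc n)"
    by (simp only: distrib_right mult.assoc)
  also have "\<dots> = of_coords (q i0) + zeta12 ^ t * of_coords (q j)"
    unfolding q[OF assms(4)] q[OF j(1)] ..
  finally have "(x i0 + zeta12 ^ t * x j) * delta ^ Suc n / 2 \<in> Z12" using t by simp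
  moreover have "lde (x j) = Suc n"
    using lde_iff[OF j(1)] j(1,3) assms(3) by (meson le_SucE)
  ultimately show ?thesis using j(1,2) by blast
qed

section \<open>Products of one- and two-level operators\<close>

definition two_level_mat :: "nat \<Rightarrow> complex \<Rightarrow> complex \<Rightarrow> complex \<Rightarrow> complex \<Rightarrow> nat \<Rightarrow> nat \<Rightarrow> complex mat" where
  "two_level_mat m a b c d j j' = mat m m (\<lambda>(r, s).
      if r = j \<and> s = j then a
      else if r = j \<and> s = j' then b
      else if r = j' \<and> s = j then c
      else if r = j' \<and> s = j' then d
      else if r = s then 1 else 0)"

lemma two_level_eq_two_level_mat:
  "two_level m M j j' = two_level_mat m (M $$ (0, 0)) (M $$ (0, 1)) (M $$ (1, 0)) (M $$ (1, 1)) j j'"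
  unfolding two_level_def two_level_mat_def ..

lemma two_level_Xmat: "two_level m Xmat j j' = two_level_mat m 0 1 1 0 j j'"
  unfolding two_level_eq_two_level_mat by (simp add: Xmat_def mat_of_rows_list_def)

lemma two_level_Hprime:
  "two_level m Hprime j j' = two_level_mat m (delta / 2) (delta / 2) (delta / 2) (- (delta / 2)) j j'"
  unfolding two_level_eq_two_level_mat by (simp add: Hprime_def mat_of_rows_list_def delta_def)

lemma one_level_carrier [simp]: "one_level m a j \<in> carrier_mat m m"
  and one_level_dim [simp]: "dim_row (one_level m a j) = m" "dim_col (one_level m a j) = m"
  by (simp_all add: one_level_def)

lemma two_level_mat_carrier [simp]: "two_level_mat m a b c d j j' \<in> carrier_mat m m"
  and two_level_mat_dim [simp]: "dim_row (two_level_mat m a b c d j j') = m" "dim_col (two_level_mat m a b c d j j') = m"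
  by (simp_all add: two_level_mat_def)

lemma one_level_index:
  "r < m \<Longrightarrow> s < m \<Longrightarrow> one_level m a j $$ (r, s) = (if r = j \<and> s = j then a else if r = s then 1 else 0)"
  by (simp add: one_level_def)

lemma two_level_mat_index:
  "r < m \<Longrightarrow> s < m \<Longrightarrow> two_level_mat m a b c d j j' $$ (r, s) =
    (if r = j \<and> s = j then a
     else if r = j \<and> s = j' then b
     else if r = j' \<and> s = j then c
     else if r = j' \<and> s = j' then d
     else if r = s then 1 else 0)"
  by (simp add: two_level_mat_def)

lemma mult_mat_index_sum:
  assumes "A \<in> carrier_mat m m" "dim_row U = m" "r < m" "c < dim_col U"
  shows "(A * U) $$ (r, c) = (\<Sum>s<m. A $$ (r, s) * U $$ (s, c))"
  using assms by (simp add: scalar_prod_def atLeast0LessThan)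

lemma one_level_mult_index:
  assumes "dim_row U = m" "r < m" "c < dim_col U" "j < m"
  shows "(one_level m a j * U) $$ (r, c) = (if r = j then a * U $$ (j, c) else U $$ (r, c))"
proof -
  have "(one_level m a j * U) $$ (r, c) = (\<Sum>s<m. one_level m a j $$ (r, s) * U $$ (s, c))"
    using assms by (intro mult_mat_index_sum) auto
  also have "\<dots> = (\<Sum>s<m. if s = r then (if r = j then a else 1) * U $$ (r, c) else 0)"
    by (rule sum.cong) (auto simp: one_level_def assms)
  also have "\<dots> = (if r = j then a else 1) * U $$ (r, c)" using assms by simp
  finally show ?thesis by simp
qed

lemma two_level_mat_mult_index:
  assumes "dim_row U = m" "r < m" "c < dim_col U" "j < j'" "j' < m"
  shows "(two_level_mat m a b c' d j j' * U) $$ (r, c) =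
    (if r = j then a * U $$ (j, c) + b * U $$ (j', c)
     else if r = j' then c' * U $$ (j, c) + d * U $$ (j', c) else U $$ (r, c))"
proof -
  define \<alpha> where "\<alpha> = (if r = j then a else if r = j' then c' else 0)"
  define \<beta> where "\<beta> = (if r = j then b else if r = j' then d else 0)"
  define \<gamma> where "\<gamma> = (if r \<noteq> j \<and> r \<noteq> j' then 1 else (0::complex))"
  have "(two_level_mat m a b c' d j j' * U) $$ (r, c) =
      (\<Sum>s<m. two_level_mat m a b c' d j j' $$ (r, s) * U $$ (s, c))"
    using assms by (intro mult_mat_index_sum) auto
  also have "\<dots> = (\<Sum>s<m. (if s = j then \<alpha> * U $$ (j, c) else 0) + (if s = j' then \<beta> * U $$ (j', c) else 0)
       + (if s = r then \<gamma> * U $$ (r, c) else 0))"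
    by (rule sum.cong) (use assms in \<open>auto simp: two_level_mat_def \<alpha>_def \<beta>_def \<gamma>_def\<close>)
  also have "\<dots> = \<alpha> * U $$ (j, c) + \<beta> * U $$ (j', c) + \<gamma> * U $$ (r, c)"
    using assms by (simp add: sum.distrib)
  finally show ?thesis using assms by (auto simp: \<alpha>_def \<beta>_def \<gamma>_def)
qed

lemma one_level_mult_one_level: "j < m \<Longrightarrow> one_level m a j * one_level m b j = one_level m (a * b) j"
  by (rule eq_matI) (auto simp: one_level_mult_index one_level_index simp del: index_mult_mat(1))

lemma one_level_1: "one_level m 1 j = 1\<^sub>m m"
proof (rule eq_matI)
  fix i k assume "i < dim_row (1\<^sub>m m)" "k < dim_col (1\<^sub>m m)"
  then show "one_level m 1 j $$ (i, k) = 1\<^sub>m m $$ (i, k)"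
    by (cases "i = k") (simp_all add: one_level_index)
qed auto

lemma two_level_mat_mult_two_level_mat:
  assumes "j < j'" "j' < m"
  shows "two_level_mat m a' b' c' d' j j' * two_level_mat m a b c d j j' =
    two_level_mat m (a'*a + b'*c) (a'*b + b'*d) (c'*a + d'*c) (c'*b + d'*d) j j'"
  by (rule eq_matI) (use assms in \<open>auto simp: two_level_mat_mult_index two_level_mat_index simp del: index_mult_mat(1)\<close>)

lemma two_level_mat_1: "two_level_mat m 1 0 0 1 j j' = 1\<^sub>m m"
proof (rule eq_matI)
  fix i k assume "i < dim_row (1\<^sub>m m)" "k < dim_col (1\<^sub>m m)"
  then show "two_level_mat m 1 0 0 1 j j' $$ (i, k) = 1\<^sub>m m $$ (i, k)"
    by (cases "i = k") (simp_all add: two_level_mat_index)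
qed auto

lemma conj_transpose_dim [simp]:
  "dim_row (conj_transpose U) = dim_col U" "dim_col (conj_transpose U) = dim_row U"
  by (simp_all add: conj_transpose_def)

lemma conj_transpose_index [simp]:
  "i < dim_col U \<Longrightarrow> j < dim_row U \<Longrightarrow> conj_transpose U $$ (i, j) = cnj (U $$ (j, i))"
  by (simp add: conj_transpose_def)

lemma conj_transpose_carrier: "U \<in> carrier_mat n m \<Longrightarrow> conj_transpose U \<in> carrier_mat m n"
  by (metis carrier_matD carrier_matI conj_transpose_dim)

lemma conj_transpose_mult:
  assumes "A \<in> carrier_mat n k" "B \<in> carrier_mat k p"
  shows "conj_transpose (A * B) = conj_transpose B * conj_transpose A"
proof (rule eq_matI)
  fix i j assume "i < dim_row (conj_transpose B * conj_transpose A)" "j < dim_col (conj_transpose B * conj_transpose A)"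
  then have i: "i < p" and j: "j < n" using assms by auto
  have "conj_transpose (A * B) $$ (i, j) = cnj (\<Sum>s = 0..<k. A $$ (j, s) * B $$ (s, i))"
    using assms i j by (simp add: scalar_prod_def)
  also have "\<dots> = (\<Sum>s = 0..<k. cnj (B $$ (s, i)) * cnj (A $$ (j, s)))"
    by (simp add: cnj_sum mult.commute)
  also have "\<dots> = (conj_transpose B * conj_transpose A) $$ (i, j)"
    using assms i j by (simp add: scalar_prod_def)
  finally show "conj_transpose (A * B) $$ (i, j) = (conj_transpose B * conj_transpose A) $$ (i, j)" .
qed (use assms in auto)

lemma conj_transpose_one: "conj_transpose (1\<^sub>m n) = 1\<^sub>m n"
proof (rule eq_matI)
  fix i k assume "i < dim_row (1\<^sub>m n)" "k < dim_col (1\<^sub>m n)"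
  then show "conj_transpose (1\<^sub>m n) $$ (i, k) = 1\<^sub>m n $$ (i, k)"
    by (cases "i = k") simp_all
qed auto

lemma conj_transpose_one_level: "conj_transpose (one_level m a j) = one_level m (cnj a) j"
proof (rule eq_matI)
  fix i k assume "i < dim_row (one_level m (cnj a) j)" "k < dim_col (one_level m (cnj a) j)"
  then show "conj_transpose (one_level m a j) $$ (i, k) = one_level m (cnj a) j $$ (i, k)"
    by (cases "i = k"; cases "i = j") (simp_all add: one_level_index)
qed auto

lemma conj_transpose_two_level_mat:
  assumes "j < j'"
  shows "conj_transpose (two_level_mat m a b c d j j') = two_level_mat m (cnj a) (cnj c) (cnj b) (cnj d) j j'"
proof (rule eq_matI)
  fix i k assume "i < dim_row (two_level_mat m (cnj a) (cnj c) (cnj b) (cnj d) j j')"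
    "k < dim_col (two_level_mat m (cnj a) (cnj c) (cnj b) (cnj d) j j')"
  then show "conj_transpose (two_level_mat m a b c d j j') $$ (i, k) =
      two_level_mat m (cnj a) (cnj c) (cnj b) (cnj d) j j' $$ (i, k)"
    using assms by (cases "i = j"; cases "i = j'"; cases "k = j"; cases "k = j'"; cases "i = k")
      (simp_all add: two_level_mat_index)
qed auto

lemma conj_transpose_mult_self_index:
  assumes "U \<in> carrier_mat m m" "r < m" "c < m"
  shows "(conj_transpose U * U) $$ (r, c) = (\<Sum>s<m. cnj (U $$ (s, r)) * U $$ (s, c))"
proof -
  have "(conj_transpose U * U) $$ (r, c) = (\<Sum>s<m. conj_transpose U $$ (r, s) * U $$ (s, c))"
    using assms conj_transpose_carrier[OF assms(1)] by (intro mult_mat_index_sum) auto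
  also have "\<dots> = (\<Sum>s<m. cnj (U $$ (s, r)) * U $$ (s, c))"
    using assms by (intro sum.cong) auto
  finally show ?thesis .
qed

lemma one_level_mult_two_level_mat:
  assumes "j < j'" "j' < m"
  shows "one_level m p j * (one_level m q j' * two_level_mat m a b c d j j') =
    two_level_mat m (p * a) (p * b) (q * c) (q * d) j j'"
  by (rule eq_matI)
    (use assms in \<open>auto simp: one_level_mult_index two_level_mat_index simp del: index_mult_mat(1)\<close>)

lemma is_product_of_one: "is_product_of m S (1\<^sub>m m)"
  unfolding is_product_of_def by (intro exI[of _ "[]"]) simp

lemma is_product_of_mult_left: "g \<in> S \<Longrightarrow> is_product_of m S B \<Longrightarrow> is_product_of m S (g * B)"
proof -
  assume "g \<in> S" "is_product_of m S B"
  then obtain gs where "set gs \<subseteq> S" "B = foldr (\<lambda>g acc. g * acc) gs (1\<^sub>m m)"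
    unfolding is_product_of_def by blast
  then show ?thesis
    unfolding is_product_of_def using \<open>g \<in> S\<close> by (intro exI[of _ "g # gs"]) simp
qed

lemma is_product_of_generator: "g \<in> S \<Longrightarrow> g \<in> carrier_mat m m \<Longrightarrow> is_product_of m S g"
  using is_product_of_mult_left[OF _ is_product_of_one, of g S m] by simp

lemma is_product_of_induct [consumes 1, case_names one mult]:
  assumes "is_product_of m S A" "P (1\<^sub>m m)"
    and "\<And>g B. g \<in> S \<Longrightarrow> is_product_of m S B \<Longrightarrow> P B \<Longrightarrow> P (g * B)"
  shows "P A"
proof -
  obtain gs where "set gs \<subseteq> S" "A = foldr (\<lambda>g acc. g * acc) gs (1\<^sub>m m)"
    using assms(1) unfolding is_product_of_def by blast
  then show ?thesis
  proof (induction gs arbitrary: A)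
    case Nil
    then show ?case using assms(2) by simp
  next
    case (Cons g gs)
    have "is_product_of m S (foldr (\<lambda>g acc. g * acc) gs (1\<^sub>m m))"
      unfolding is_product_of_def using Cons.prems(1) by auto
    then show ?case using Cons assms(3) by simp
  qed
qed

lemma is_product_of_carrier:
  assumes "S \<subseteq> carrier_mat m m" "is_product_of m S A"
  shows "A \<in> carrier_mat m m"
  using assms(2)
proof (induction rule: is_product_of_induct)
  case (mult g B)
  then show ?case using assms(1) by (meson mult_carrier_mat subsetD)
qed simp

lemma is_product_of_mult:
  assumes "S \<subseteq> carrier_mat m m" "is_product_of m S A" "is_product_of m S B"
  shows "is_product_of m S (A * B)"
  using assms(2)
proof (induction rule: is_product_of_induct)
  case one
  then show ?case using assms(3) is_product_of_carrier[OF assms(1,3)] by simp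
next
  case (mult g A')
  have "g * A' * B = g * (A' * B)"
    using mult.hyps assms(1) is_product_of_carrier[OF assms(1)] assms(3) by (intro assoc_mult_mat) auto
  then show ?case using is_product_of_mult_left[OF mult.hyps(1) mult.IH] by simp
qed

lemma is_product_of_mono: "S \<subseteq> T \<Longrightarrow> is_product_of m S A \<Longrightarrow> is_product_of m T A"
  unfolding is_product_of_def by blast

lemma is_product_of_left_inverse:
  assumes "S \<subseteq> carrier_mat m m" "\<And>g. g \<in> S \<Longrightarrow> \<exists>h. is_product_of m S h \<and> h * g = 1\<^sub>m m"
    "is_product_of m S A"
  shows "\<exists>H. is_product_of m S H \<and> H * A = 1\<^sub>m m"
  using assms(3)
proof (induction rule: is_product_of_induct)
  case one
  show ?case by (intro exI[of _ "1\<^sub>m m"]) (simp add: is_product_of_one)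
next
  case (mult g B)
  obtain H where H: "is_product_of m S H" "H * B = 1\<^sub>m m" using mult.IH by blast
  obtain h where h: "is_product_of m S h" "h * g = 1\<^sub>m m" using assms(2) mult.hyps(1) by blast
  have carrier: "H \<in> carrier_mat m m" "h \<in> carrier_mat m m" "g \<in> carrier_mat m m" "B \<in> carrier_mat m m"
    using H(1) h(1) mult.hyps assms(1) is_product_of_carrier[OF assms(1)] by auto
  have "H * h * (g * B) = H * (h * (g * B))"
    using assoc_mult_mat[OF carrier(1,2) mult_carrier_mat[OF carrier(3,4)]] .
  also have "\<dots> = H * ((h * g) * B)"
    using carrier by simp
  also have "\<dots> = 1\<^sub>m m" using h(2) H(2) carrier by simp
  finally show ?case using is_product_of_mult[OF assms(1) H(1) h(1)] by blast
qed

lemma is_product_of_one_level_power: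
  assumes "one_level m a j \<in> S" "j < m"
  shows "is_product_of m S (one_level m (a ^ t) j)"
proof (induction t)
  case 0
  then show ?case using is_product_of_one by (simp add: one_level_1)
next
  case (Suc t)
  then show ?case
    using is_product_of_mult_left[OF assms(1) Suc.IH] assms(2) by (simp add: one_level_mult_one_level)
qed

lemma generators_cases [consumes 1, case_names zeta X H]:
  assumes "g \<in> generators m"
  obtains (zeta) j where "j < m" "g = one_level m zeta12 j"
  | (X) j j' where "j < j'" "j' < m" "g = two_level_mat m 0 1 1 0 j j'"
  | (H) j j' where "j < j'" "j' < m"
      "g = two_level_mat m (delta / 2) (delta / 2) (delta / 2) (- (delta / 2)) j j'"
  using assms unfolding generators_def two_level_Xmat two_level_Hprime by blast

lemma one_level_zeta12_in_generators: "j < m \<Longrightarrow> one_level m zeta12 j \<in> generators m"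
  unfolding generators_def by blast

lemma Xmat_in_generators: "j < j' \<Longrightarrow> j' < m \<Longrightarrow> two_level_mat m 0 1 1 0 j j' \<in> generators m"
  unfolding generators_def two_level_Xmat[symmetric] by blast

lemma Hprime_in_generators:
  "j < j' \<Longrightarrow> j' < m \<Longrightarrow>
    two_level_mat m (delta / 2) (delta / 2) (delta / 2) (- (delta / 2)) j j' \<in> generators m"
  unfolding generators_def two_level_Hprime[symmetric] by blast

lemma generators_carrier: "generators m \<subseteq> carrier_mat m m"
proof
  fix g assume "g \<in> generators m"
  then show "g \<in> carrier_mat m m" by (cases rule: generators_cases) simp_all
qed

lemma generator_left_inverse:
  assumes "g \<in> generators m"
  shows "\<exists>h. is_product_of m (generators m) h \<and> h * g = 1\<^sub>m m"
  using assms
proof (cases rule: generators_cases)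
  case (zeta j)
  have "zeta12 ^ 11 * zeta12 = 1"
    using zeta12_power_12 by (simp add: power_Suc2[symmetric] del: power_Suc)
  then have "one_level m (zeta12 ^ 11) j * g = 1\<^sub>m m"
    using zeta by (simp add: one_level_mult_one_level one_level_1)
  then show ?thesis
    using is_product_of_one_level_power[OF one_level_zeta12_in_generators] zeta(1) by blast
next
  case (X j j')
  then have "g * g = 1\<^sub>m m" by (simp add: two_level_mat_mult_two_level_mat two_level_mat_1)
  then show ?thesis
    using is_product_of_generator[OF assms] generators_carrier assms X by auto
next
  case (H j j')
  \<comment> \<open>\<open>H'\<close> squares to \<open>\<i>\<close> times the identity, and \<open>- \<i> = zeta12 ^ 9\<close>.\<close>
  have "zeta12 ^ 9 = \<i> ^ 3"
    unfolding zeta12_power_3[symmetric] power_mult[symmetric] by simp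
  then have zeta12_power_9: "zeta12 ^ 9 = - \<i>" by (simp add: power3_eq_cube)
  define h where "h = one_level m (zeta12 ^ 9) j * (one_level m (zeta12 ^ 9) j' * g)"
  have "is_product_of m (generators m) (one_level m (zeta12 ^ 9) i)" if "i < m" for i
    using that by (intro is_product_of_one_level_power one_level_zeta12_in_generators)
  moreover have "is_product_of m (generators m) g"
    using assms generators_carrier by (intro is_product_of_generator) auto
  ultimately have "is_product_of m (generators m) h"
    unfolding h_def using H(1,2) is_product_of_mult[OF generators_carrier] by simp
  moreover have "delta / 2 * (delta / 2) = \<i> / 2"
    by (simp add: delta_def field_simps)
  then have "h * g = 1\<^sub>m m"
    unfolding h_def H one_level_mult_two_level_mat[OF H(1,2)] zeta12_power_9
    using H(1,2) by (simp add: two_level_mat_mult_two_level_mat two_level_mat_1 algebra_simps)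
  ultimately show ?thesis by blast
qed

definition unitary_R12 :: "nat \<Rightarrow> complex mat \<Rightarrow> bool" where
  "unitary_R12 m U \<longleftrightarrow>
     U \<in> carrier_mat m m \<and> conj_transpose U * U = 1\<^sub>m m \<and> (\<forall>i<m. \<forall>j<m. U $$ (i, j) \<in> R12)"

lemma unitary_R12_iff:
  assumes "U \<in> carrier_mat m m"
  shows "unitary_R12 m U \<longleftrightarrow> unitary_mat U \<and> (\<forall>i<m. \<forall>j<m. U $$ (i, j) \<in> R12)"
  using assms conj_transpose_carrier[OF assms] mat_mult_left_right_inverse
  unfolding unitary_R12_def unitary_mat_def by (metis carrier_matD(1))

lemma unitary_R12_mult:
  assumes "unitary_R12 m A" "unitary_R12 m B"
  shows "unitary_R12 m (A * B)"
proof -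
  have A: "A \<in> carrier_mat m m" "conj_transpose A * A = 1\<^sub>m m"
    and B: "B \<in> carrier_mat m m" "conj_transpose B * B = 1\<^sub>m m"
    using assms unfolding unitary_R12_def by auto
  have cA: "conj_transpose A \<in> carrier_mat m m" and cB: "conj_transpose B \<in> carrier_mat m m"
    using A B by (simp_all add: conj_transpose_carrier)
  have "conj_transpose (A * B) * (A * B) = (conj_transpose B * conj_transpose A) * (A * B)"
    by (simp add: conj_transpose_mult[OF A(1) B(1)])
  also have "\<dots> = conj_transpose B * (conj_transpose A * (A * B))"
    by (rule assoc_mult_mat[OF cB cA mult_carrier_mat[OF A(1) B(1)]])
  also have "conj_transpose A * (A * B) = (conj_transpose A * A) * B"
    by (rule assoc_mult_mat[symmetric, OF cA A(1) B(1)])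
  also have "\<dots> = B" using A B by simp
  also have "conj_transpose B * B = 1\<^sub>m m" by (rule B(2))
  finally have unitary: "conj_transpose (A * B) * (A * B) = 1\<^sub>m m" .
  have "(A * B) $$ (i, j) \<in> R12" if "i < m" "j < m" for i j
  proof -
    have "(A * B) $$ (i, j) = (\<Sum>s<m. A $$ (i, s) * B $$ (s, j))"
      using A B that by (intro mult_mat_index_sum) auto
    also have "\<dots> \<in> R12" using assms that unfolding unitary_R12_def by (intro R12_sum R12.mult) auto
    finally show ?thesis .
  qed
  then show ?thesis using A B unitary unfolding unitary_R12_def by auto
qed

lemma unitary_R12_one: "unitary_R12 m (1\<^sub>m m)"
  by (auto simp: unitary_R12_def conj_transpose_one intro: R12.intros)

lemma generator_unitary_R12:
  assumes "g \<in> generators m"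
  shows "unitary_R12 m g"
  using assms
proof (cases rule: generators_cases)
  case (zeta j)
  have "cnj zeta12 * zeta12 = 1"
    using cmod_zeta12 by (metis complex_norm_square mult.commute of_real_1 power_one)
  then show ?thesis
    using zeta by (auto simp: unitary_R12_def conj_transpose_one_level one_level_mult_one_level
        one_level_1 one_level_index intro: R12.intros)
next
  case (X j j')
  then show ?thesis
    by (auto simp: unitary_R12_def conj_transpose_two_level_mat two_level_mat_mult_two_level_mat
        two_level_mat_1 two_level_mat_index intro: R12.intros)
next
  case (H j j')
  have "cnj (delta / 2) * (delta / 2) = 1 / 2"
    by (simp add: delta_def complex_eq_iff)
  then have "conj_transpose g * g = 1\<^sub>m m"
    using H by (simp add: conj_transpose_two_level_mat two_level_mat_mult_two_level_mat two_level_mat_1)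
  moreover have "g $$ (r, s) \<in> R12" if "r < m" "s < m" for r s
    using H that R12_half_delta by (auto simp: two_level_mat_index intro: R12.intros)
  ultimately show ?thesis using H unfolding unitary_R12_def by auto
qed

lemma is_product_of_generators_unitary_R12: "is_product_of m (generators m) U \<Longrightarrow> unitary_R12 m U"
  by (induction rule: is_product_of_induct) (auto intro: unitary_R12_mult generator_unitary_R12 unitary_R12_one)

lemma unitary_R12_column_norm:
  assumes "unitary_R12 m U" "c < m"
  shows "(\<Sum>i<m. (cmod (U $$ (i, c)))^2) = 1"
proof -
  have U: "U \<in> carrier_mat m m" using assms unfolding unitary_R12_def by auto
  have "1 = (conj_transpose U * U) $$ (c, c)" using assms unfolding unitary_R12_def by auto
  also have "\<dots> = (\<Sum>i<m. cnj (U $$ (i, c)) * U $$ (i, c))"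
    using U assms by (intro conj_transpose_mult_self_index) auto
  also have "\<dots> = (\<Sum>i<m. complex_of_real ((cmod (U $$ (i, c)))^2))"
    by (intro sum.cong refl) (metis complex_norm_square mult.commute of_real_power)
  also have "\<dots> = complex_of_real (\<Sum>i<m. (cmod (U $$ (i, c)))^2)" by simp
  finally show ?thesis by (metis of_real_eq_1_iff)
qed

section \<open>Column reduction\<close>

definition identity_cols :: "nat \<Rightarrow> nat \<Rightarrow> complex mat \<Rightarrow> bool" where
  "identity_cols m k U \<longleftrightarrow> (\<forall>c<k. \<forall>r<m. U $$ (r, c) = (if r = c then 1 else 0))"

lemma identity_cols_mult:
  assumes "A \<in> carrier_mat m m" "U \<in> carrier_mat m m" "k \<le> m" "identity_cols m k A" "identity_cols m k U"
  shows "identity_cols m k (A * U)"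
  unfolding identity_cols_def
proof (intro allI impI)
  fix c r assume c: "c < k" and r: "r < m"
  have "(A * U) $$ (r, c) = (\<Sum>s<m. A $$ (r, s) * U $$ (s, c))"
    using assms c r by (intro mult_mat_index_sum) auto
  also have "\<dots> = (\<Sum>s<m. if s = c then A $$ (r, c) else 0)"
    using assms(5) c by (intro sum.cong) (auto simp: identity_cols_def)
  also have "\<dots> = A $$ (r, c)" using c assms(3) by simp
  also have "\<dots> = (if r = c then 1 else 0)" using assms(4) c r by (simp add: identity_cols_def)
  finally show "(A * U) $$ (r, c) = (if r = c then 1 else 0)" .
qed

lemma identity_cols_one_level: "k \<le> j \<Longrightarrow> j < m \<Longrightarrow> identity_cols m k (one_level m a j)"
  by (auto simp: identity_cols_def one_level_index)

lemma identity_cols_two_level_mat: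
  "k \<le> j \<Longrightarrow> j < j' \<Longrightarrow> j' < m \<Longrightarrow> identity_cols m k (two_level_mat m a b c d j j')"
  by (auto simp: identity_cols_def two_level_mat_index)

lemma identity_cols_Suc:
  "identity_cols m k U \<Longrightarrow> \<forall>r<m. U $$ (r, k) = (if r = k then 1 else 0) \<Longrightarrow> identity_cols m (Suc k) U"
  by (auto simp: identity_cols_def less_Suc_eq)

lemma identity_cols_eq_one: "U \<in> carrier_mat m m \<Longrightarrow> identity_cols m m U \<Longrightarrow> U = 1\<^sub>m m"
  by (rule eq_matI) (auto simp: identity_cols_def)

lemma unitary_R12_column_zero_above:
  assumes "unitary_R12 m U" "identity_cols m k U" "k < m" "r < k"
  shows "U $$ (r, k) = 0"
proof -
  have U: "U \<in> carrier_mat m m" using assms unfolding unitary_R12_def by auto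
  have "0 = (conj_transpose U * U) $$ (r, k)" using assms unfolding unitary_R12_def by auto
  also have "\<dots> = (\<Sum>s<m. cnj (U $$ (s, r)) * U $$ (s, k))"
    using U assms by (intro conj_transpose_mult_self_index) auto
  also have "\<dots> = (\<Sum>s<m. if s = r then U $$ (r, k) else 0)"
    using assms(2,3,4) unfolding identity_cols_def by (intro sum.cong) auto
  also have "\<dots> = U $$ (r, k)" using assms by simp
  finally show ?thesis by simp
qed

definition generators_fixing :: "nat \<Rightarrow> nat \<Rightarrow> complex mat set" where
  "generators_fixing m k = {g \<in> generators m. identity_cols m k g}"

lemma generators_fixing_subset: "generators_fixing m k \<subseteq> generators m"
  by (auto simp: generators_fixing_def)

lemma generators_fixing_carrier: "generators_fixing m k \<subseteq> carrier_mat m m"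
  using generators_fixing_subset generators_carrier by blast

lemma one_level_zeta12_in_generators_fixing:
  "k \<le> j \<Longrightarrow> j < m \<Longrightarrow> one_level m zeta12 j \<in> generators_fixing m k"
  by (simp add: generators_fixing_def one_level_zeta12_in_generators identity_cols_one_level)

lemma Xmat_in_generators_fixing:
  "k \<le> j \<Longrightarrow> j < j' \<Longrightarrow> j' < m \<Longrightarrow> two_level_mat m 0 1 1 0 j j' \<in> generators_fixing m k"
  by (simp add: generators_fixing_def Xmat_in_generators identity_cols_two_level_mat)

lemma Hprime_in_generators_fixing:
  "k \<le> j \<Longrightarrow> j < j' \<Longrightarrow> j' < m \<Longrightarrow>
    two_level_mat m (delta / 2) (delta / 2) (delta / 2) (- (delta / 2)) j j' \<in> generators_fixing m k"
  by (simp add: generators_fixing_def Hprime_in_generators identity_cols_two_level_mat)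

lemma is_product_of_generators_fixing:
  assumes "k \<le> m" "is_product_of m (generators_fixing m k) G"
  shows "identity_cols m k G"
  using assms(2)
proof (induction rule: is_product_of_induct)
  case one
  show ?case using assms(1) by (simp add: identity_cols_def)
next
  case (mult g B)
  then show ?case
    using assms(1) generators_fixing_carrier is_product_of_carrier[OF generators_fixing_carrier]
    by (intro identity_cols_mult) (auto simp: generators_fixing_def)
qed

lemma unitary_identity_cols_mult_generators_fixing:
  assumes "k \<le> m" "is_product_of m (generators_fixing m k) G" "unitary_R12 m U" "identity_cols m k U"
  shows "unitary_R12 m (G * U) \<and> identity_cols m k (G * U)"
proof
  show "unitary_R12 m (G * U)"
    using is_product_of_generators_unitary_R12[OF is_product_of_mono[OF generators_fixing_subset assms(2)]]
      assms(3) by (rule unitary_R12_mult)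
  show "identity_cols m k (G * U)"
    using assms is_product_of_carrier[OF generators_fixing_carrier] is_product_of_generators_fixing
    by (intro identity_cols_mult) (auto simp: unitary_R12_def)
qed

lemma reduce_column_in_Z12:
  assumes "unitary_R12 m U" "identity_cols m k U" "k < m" "\<forall>i<m. U $$ (i, k) \<in> Z12"
  shows "\<exists>G. is_product_of m (generators_fixing m k) G \<and> (\<forall>r<m. (G * U) $$ (r, k) = (if r = k then 1 else 0))"
proof -
  have U: "U \<in> carrier_mat m m" using assms(1) unfolding unitary_R12_def by auto
  then have dim_U: "dim_row U = m" "dim_col U = m" by auto
  obtain p t where p: "p < m" "U $$ (p, k) = zeta12 ^ t" and zero: "\<And>i. i < m \<Longrightarrow> i \<noteq> p \<Longrightarrow> U $$ (i, k) = 0"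
    using unit_vector_in_Z12[OF unitary_R12_column_norm[OF assms(1,3)]] assms(4) by blast
  have "k \<le> p"
    using p unitary_R12_column_zero_above[OF assms(1-3), of p] by (cases "k \<le> p") simp_all
  define G1 where "G1 = one_level m (zeta12 ^ (11 * t)) p"
  have G1: "is_product_of m (generators_fixing m k) G1"
    unfolding G1_def using one_level_zeta12_in_generators_fixing[OF \<open>k \<le> p\<close> p(1)] p(1)
    by (rule is_product_of_one_level_power)
  have "zeta12 ^ (11 * t) * zeta12 ^ t = (zeta12 ^ 12) ^ t"
    by (simp flip: power_add power_mult)
  then have "zeta12 ^ (11 * t) * U $$ (p, k) = 1" using p(2) by (simp add: zeta12_power_12)
  then have G1U: "(G1 * U) $$ (r, k) = (if r = p then 1 else 0)" if "r < m" for r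
    unfolding G1_def using dim_U that assms(3) p(1) zero by (simp add: one_level_mult_index del: index_mult_mat(1))
  show ?thesis
  proof (cases "p = k")
    case True
    then show ?thesis using G1 G1U by blast
  next
    case False
    define G where "G = two_level_mat m 0 1 1 0 k p * G1"
    have "is_product_of m (generators_fixing m k) G"
      unfolding G_def using False \<open>k \<le> p\<close> p(1) G1
      by (intro is_product_of_mult_left Xmat_in_generators_fixing) auto
    moreover have "(G * U) $$ (r, k) = (if r = k then 1 else 0)" if "r < m" for r
    proof -
      have "G * U = two_level_mat m 0 1 1 0 k p * (G1 * U)"
        unfolding G_def using G1 U is_product_of_carrier[OF generators_fixing_carrier]
        by (intro assoc_mult_mat) auto
      moreover have "dim_row (G1 * U) = m" "dim_col (G1 * U) = m" using dim_U by (simp_all add: G1_def)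
      ultimately show ?thesis
        using that False \<open>k \<le> p\<close> p(1) G1U assms(3)
        by (simp add: two_level_mat_mult_index del: index_mult_mat(1))
    qed
    ultimately show ?thesis by blast
  qed
qed

lemma lde_Hprime_mult:
  fixes W :: "complex mat"
  assumes "dim_row W = m" "c < dim_col W" "a < m" "b < m" "a \<noteq> b"
    "W $$ (b, c) * delta ^ Suc n \<in> Z12" "(W $$ (a, c) + W $$ (b, c)) * delta ^ Suc n / 2 \<in> Z12"
  defines "V \<equiv> two_level_mat m (delta / 2) (delta / 2) (delta / 2) (- (delta / 2)) (min a b) (max a b) * W"
  shows "lde (V $$ (a, c)) \<le> n" "lde (V $$ (b, c)) \<le> n"
    "\<And>r. r < m \<Longrightarrow> r \<noteq> a \<Longrightarrow> r \<noteq> b \<Longrightarrow> V $$ (r, c) = W $$ (r, c)"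
proof -
  define x y where "x = W $$ (a, c)" and "y = W $$ (b, c)"
  note lde_sum = lde_Hprime_combination[OF assms(6,7)[folded x_def y_def]]
  have V_index: "V $$ (r, c) =
      (if r = min a b then delta / 2 * (W $$ (min a b, c) + W $$ (max a b, c))
       else if r = max a b then delta / 2 * (W $$ (min a b, c) - W $$ (max a b, c)) else W $$ (r, c))"
    if "r < m" for r
    unfolding V_def using assms(1-5) that
    by (simp add: two_level_mat_mult_index algebra_simps del: index_mult_mat(1))
  show "lde (V $$ (a, c)) \<le> n" "lde (V $$ (b, c)) \<le> n"
  proof (atomize (full), cases "a < b")
    case True
    then have "V $$ (a, c) = delta / 2 * (x + y)" "V $$ (b, c) = delta / 2 * (x - y)"
      using V_index[OF assms(3)] V_index[OF assms(4)] by (simp_all add: x_def y_def)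
    then show "lde (V $$ (a, c)) \<le> n \<and> lde (V $$ (b, c)) \<le> n" using lde_sum by (simp only:)
  next
    case False
    then have "V $$ (a, c) = - (delta / 2 * (x - y))" "V $$ (b, c) = delta / 2 * (x + y)"
      using V_index[OF assms(3)] V_index[OF assms(4)] assms(5) by (simp_all add: x_def y_def algebra_simps)
    then show "lde (V $$ (a, c)) \<le> n \<and> lde (V $$ (b, c)) \<le> n"
      using lde_sum by (simp only: lde_uminus)
  qed
  show "V $$ (r, c) = W $$ (r, c)" if "r < m" "r \<noteq> a" "r \<noteq> b" for r
    using V_index[OF that(1)] that by (simp add: min_def max_def)
qed

lemma sum_lde_less:
  fixes x y :: "nat \<Rightarrow> complex"
  assumes "a < m" "b < m" "lde (x a) = Suc n" "lde (x b) = Suc n" "lde (y a) \<le> n" "lde (y b) \<le> n"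
    "\<And>i. i < m \<Longrightarrow> i \<noteq> a \<Longrightarrow> i \<noteq> b \<Longrightarrow> y i = x i"
  shows "(\<Sum>i<m. lde (y i)) < (\<Sum>i<m. lde (x i))"
proof (rule sum_strict_mono_ex1)
  show "\<forall>i\<in>{..<m}. lde (y i) \<le> lde (x i)"
  proof
    fix i assume "i \<in> {..<m}"
    then show "lde (y i) \<le> lde (x i)" using assms by (cases "i = a \<or> i = b") auto
  qed
  show "\<exists>i\<in>{..<m}. lde (y i) < lde (x i)" using assms(1,3,5) by (intro bexI[of _ a]) auto
qed simp

lemma reduce_column_lde:
  assumes "unitary_R12 m U" "identity_cols m k U" "k < m"
    "i0 < m" "lde (U $$ (i0, k)) = Suc n" "\<forall>i<m. lde (U $$ (i, k)) \<le> Suc n"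
  shows "\<exists>G. is_product_of m (generators_fixing m k) G \<and>
    (\<Sum>i<m. lde ((G * U) $$ (i, k))) < (\<Sum>i<m. lde (U $$ (i, k)))"
proof -
  have U: "U \<in> carrier_mat m m" and R12: "\<forall>i<m. U $$ (i, k) \<in> R12"
    using assms(1,3) unfolding unitary_R12_def by auto
  then have dim_U: "dim_row U = m" "dim_col U = m" by auto
  obtain j t where j: "j < m" "j \<noteq> i0" "lde (U $$ (j, k)) = Suc n"
    and sum_div_2: "(U $$ (i0, k) + zeta12 ^ t * U $$ (j, k)) * delta ^ Suc n / 2 \<in> Z12"
    using exists_lde_partner[OF unitary_R12_column_norm[OF assms(1,3)] R12 assms(6,4,5)] by blast
  have "k \<le> i" if "i < m" "lde (U $$ (i, k)) = Suc n" for i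
    using unitary_R12_column_zero_above[OF assms(1-3), of i] that by (cases "k \<le> i") auto
  then have "k \<le> i0" "k \<le> j" using assms(4,5) j(1,3) by auto
  define G1 where "G1 = one_level m (zeta12 ^ t) j"
  define G2 where "G2 = two_level_mat m (delta / 2) (delta / 2) (delta / 2) (- (delta / 2)) (min i0 j) (max i0 j)"
  have "G2 \<in> generators_fixing m k"
    unfolding G2_def using j(1,2) assms(4) \<open>k \<le> i0\<close> \<open>k \<le> j\<close>
    by (intro Hprime_in_generators_fixing) (auto simp: min_def max_def)
  then have G: "is_product_of m (generators_fixing m k) (G2 * G1)"
    unfolding G1_def using one_level_zeta12_in_generators_fixing \<open>k \<le> j\<close> j(1)
    by (intro is_product_of_mult_left is_product_of_one_level_power)
  have G1U: "(G1 * U) $$ (r, k) = (if r = j then zeta12 ^ t * U $$ (j, k) else U $$ (r, k))" if "r < m" for r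
    unfolding G1_def using that dim_U assms(3) j(1) by (simp add: one_level_mult_index del: index_mult_mat(1))
  have "U $$ (j, k) * delta ^ Suc n \<in> Z12"
    using Z12_mult_delta_power_iff_lde_le[of "U $$ (j, k)" "Suc n"] R12 j(1,3) by simp
  then have Z12_j: "(G1 * U) $$ (j, k) * delta ^ Suc n \<in> Z12"
    using G1U[OF j(1)] by (simp add: Z12_mult Z12_power mult.assoc)
  have Z12_sum: "((G1 * U) $$ (i0, k) + (G1 * U) $$ (j, k)) * delta ^ Suc n / 2 \<in> Z12"
    using G1U assms(4) j(1,2) sum_div_2 by simp
  have dim_G1U: "dim_row (G1 * U) = m" "k < dim_col (G1 * U)" using dim_U assms(3) by (simp_all add: G1_def)
  note lde_V = lde_Hprime_mult[OF dim_G1U assms(4) j(1) j(2)[symmetric] Z12_j Z12_sum, folded G2_def]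
  have GU: "G2 * G1 * U = G2 * (G1 * U)"
    unfolding G1_def G2_def using U by (intro assoc_mult_mat) auto
  have "(\<Sum>i<m. lde ((G2 * G1 * U) $$ (i, k))) < (\<Sum>i<m. lde (U $$ (i, k)))"
    unfolding GU
    by (rule sum_lde_less[where a = i0 and b = j and n = n]) (use assms(4,5) j lde_V G1U in auto)
  then show ?thesis using G by blast
qed

lemma reduce_column:
  assumes "unitary_R12 m U" "identity_cols m k U" "k < m"
  shows "\<exists>G. is_product_of m (generators_fixing m k) G \<and> (\<forall>r<m. (G * U) $$ (r, k) = (if r = k then 1 else 0))"
  using assms(1,2)
proof (induction "\<Sum>i<m. lde (U $$ (i, k))" arbitrary: U rule: less_induct)
  case less
  define d where "d = Max ((\<lambda>i. lde (U $$ (i, k))) ` {..<m})"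
  have d_max: "\<forall>i<m. lde (U $$ (i, k)) \<le> d" unfolding d_def by (auto intro: Max_ge)
  have "d \<in> (\<lambda>i. lde (U $$ (i, k))) ` {..<m}" unfolding d_def using assms(3) by (intro Max_in) auto
  then obtain i0 where i0: "i0 < m" "lde (U $$ (i0, k)) = d" by auto
  show ?case
  proof (cases d)
    case 0
    have "U $$ (i, k) \<in> Z12" if "i < m" for i
      using Z12_mult_delta_power_lde[of "U $$ (i, k)"] less.prems(1) that d_max 0 assms(3)
      by (simp add: unitary_R12_def)
    then show ?thesis using reduce_column_in_Z12[OF less.prems assms(3)] by blast
  next
    case (Suc n)
    have "lde (U $$ (i0, k)) = Suc n" "\<forall>i<m. lde (U $$ (i, k)) \<le> Suc n"
      using i0(2) d_max Suc by auto
    from reduce_column_lde[OF less.prems assms(3) i0(1) this]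
    obtain G1 where G1: "is_product_of m (generators_fixing m k) G1"
      and decrease: "(\<Sum>i<m. lde ((G1 * U) $$ (i, k))) < (\<Sum>i<m. lde (U $$ (i, k)))"
      by blast
    have "unitary_R12 m (G1 * U) \<and> identity_cols m k (G1 * U)"
      using unitary_identity_cols_mult_generators_fixing[OF _ G1 less.prems] assms(3) by simp
    then obtain G2 where G2: "is_product_of m (generators_fixing m k) G2"
      and "\<forall>r<m. (G2 * (G1 * U)) $$ (r, k) = (if r = k then 1 else 0)"
      using less.hyps[OF decrease] by blast
    moreover have "G2 * G1 * U = G2 * (G1 * U)"
      using is_product_of_carrier[OF generators_fixing_carrier] G1 G2 less.prems(1)
      by (metis assoc_mult_mat unitary_R12_def)
    ultimately show ?thesis
      using is_product_of_mult[OF generators_fixing_carrier G2 G1] by auto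
  qed
qed

lemma reduce_to_identity:
  assumes "unitary_R12 m U" "identity_cols m k U" "k \<le> m"
  shows "\<exists>G. is_product_of m (generators m) G \<and> G * U = 1\<^sub>m m"
  using assms
proof (induction "m - k" arbitrary: k U)
  case 0
  then have "U = 1\<^sub>m m" using identity_cols_eq_one by (simp add: unitary_R12_def)
  then show ?case using 0 by (intro exI[of _ "1\<^sub>m m"]) (simp add: is_product_of_one)
next
  case (Suc d)
  have "k < m" using Suc.hyps(2) by arith
  then obtain G1 where G1: "is_product_of m (generators_fixing m k) G1"
    and column: "\<forall>r<m. (G1 * U) $$ (r, k) = (if r = k then 1 else 0)"
    using reduce_column[OF Suc.prems(1,2)] by blast
  have "unitary_R12 m (G1 * U)" "identity_cols m (Suc k) (G1 * U)"
    using unitary_identity_cols_mult_generators_fixing[OF Suc.prems(3) G1 Suc.prems(1,2)] column identity_cols_Suc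
    by auto
  moreover have "d = m - Suc k" "Suc k \<le> m" using Suc.hyps(2) by arith+
  ultimately obtain G2 where G2: "is_product_of m (generators m) G2" "G2 * (G1 * U) = 1\<^sub>m m"
    using Suc.hyps(1) by blast
  have G1': "is_product_of m (generators m) G1"
    using is_product_of_mono[OF generators_fixing_subset G1] .
  have "G2 * G1 * U = G2 * (G1 * U)"
    using is_product_of_carrier[OF generators_carrier] G1' G2(1) Suc.prems(1)
    by (metis assoc_mult_mat unitary_R12_def)
  then show ?case using G2 is_product_of_mult[OF generators_carrier G2(1) G1'] by auto
qed

theorem theorem7p6:
  fixes U :: "complex mat" and m :: nat
  assumes "U \<in> carrier_mat m m"
  shows "(unitary_mat U \<and> (\<forall>i<m. \<forall>j<m. U $$ (i, j) \<in> R12)) \<longleftrightarrow>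
         is_product_of m (generators m) U"
proof
  assume "unitary_mat U \<and> (\<forall>i<m. \<forall>j<m. U $$ (i, j) \<in> R12)"
  then have "unitary_R12 m U" using unitary_R12_iff[OF assms] by simp
  moreover have "identity_cols m 0 U" by (simp add: identity_cols_def)
  ultimately obtain G where G: "is_product_of m (generators m) G" "G * U = 1\<^sub>m m"
    using reduce_to_identity by blast
  obtain H where H: "is_product_of m (generators m) H" "H * G = 1\<^sub>m m"
    using is_product_of_left_inverse[OF generators_carrier generator_left_inverse G(1)] by blast
  have "H * (G * U) = (H * G) * U"
    using is_product_of_carrier[OF generators_carrier] assms H(1) G(1) by (metis assoc_mult_mat)
  then have "H = U" using assms G(2) H(2) is_product_of_carrier[OF generators_carrier H(1)] by simp
  then show "is_product_of m (generators m) U" using H(1) by simp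
next
  assume "is_product_of m (generators m) U"
  then show "unitary_mat U \<and> (\<forall>i<m. \<forall>j<m. U $$ (i, j) \<in> R12)"
    using is_product_of_generators_unitary_R12 unitary_R12_iff[OF assms] by blast
qed

end
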